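(* Let $k\le n$ be positive integers and $A\in\mathbb{C}^{n\times n}$ with eigenvalues ordered so that $|\lambda_1(A)|\ge\cdots\ge|\lambda_n(A)|$. Then $$\left|\prod_{i=1}^k\lambda_i(A)\right|\le\left(\frac nk\right)^{k/2}\sqrt n^{\,k}\min\left\{\max_{|\alpha|=k}\prod_{i\in\alpha}\|\mathrm{col}_i(A)\|_\infty,\ \max_{|\alpha|=k}\prod_{i\in\alpha}\|\mathrm{row}_i(A)\|_\infty\right\},$$ where the maxima are over subsets $\alpha\subseteq\{1,\ldots,n\}$ with $|\alpha|=k$.
   Context: $\mathrm{col}_i(A)$ is the $i$th column and $\mathrm{row}_i(A)$ the (transposed) $i$th row of $A$; $\|\cdot\|_\infty$ is the maximum-modulus vector norm. *)

theory Defs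
  imports "Jordan_Normal_Form.Jordan_Normal_Form_Existence"
begin

definition vec_inf_norm :: "complex vec \<Rightarrow> real" where
  "vec_inf_norm v = (MAX i \<in> {0..<dim_vec v}. cmod (v $ i))"

end

(* Schur triangularization gives A Q = Q T with T upper triangular and diag T = eigs. The first
   k columns P of Q span an A-invariant subspace, A P = P C with C the leading k x k block of T,
   so det C is the product of the first k eigenvalues.

   Pull the column bounds out as A = B D with D = diag (c_j) and |B_ij| <= 1. Cauchy-Binet
   expands det (P^* P) det C = det ((P^* B) (D P)) into a sum over k-subsets S of products of
   minors weighted by prod_{j in S} c_j; Cauchy-Schwarz and Cauchy-Binet for the two Gram
   matrices bound it by max_S prod_{j in S} c_j * sqrt (det (P^* B B^* P)) * sqrt (det (P^* P)).
   Finally det (P^* B B^* P) / det (P^* P) is the determinant of the compression of B B^* to the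
   column space of P, whose eigenvalues are nonnegative with sum at most |B|_F^2 <= n^2, so by
   AM-GM it is at most (n^2 / k)^k. The row version follows by transposing A. *)

theory Submission
  imports Defs "Jordan_Normal_Form.DL_Submatrix"
begin

section \<open>Adjoints, traces and submatrices\<close>

lemma mat_adjoint_dim [simp]:
  "dim_row (mat_adjoint A) = dim_col A" "dim_col (mat_adjoint A) = dim_row A"
  by (simp_all add: mat_adjoint_def)

lemma mat_adjoint_carrier [simp]: "A \<in> carrier_mat n m \<Longrightarrow> mat_adjoint A \<in> carrier_mat m n"
  by (rule carrier_matI) simp_all

lemma mat_adjoint_index [simp]:
  "i < dim_col A \<Longrightarrow> j < dim_row A \<Longrightarrow> mat_adjoint A $$ (i, j) = conjugate (A $$ (j, i))"
  by (simp add: mat_adjoint_def mat_of_rows_index)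

lemma mat_adjoint_adjoint [simp]: "mat_adjoint (mat_adjoint A) = A"
  by (rule eq_matI) auto

lemma mat_adjoint_mult:
  fixes A B :: "'a :: conjugatable_field mat"
  assumes "A \<in> carrier_mat n m" "B \<in> carrier_mat m l"
  shows "mat_adjoint (A * B) = mat_adjoint B * mat_adjoint A"
  using assms
  by (intro eq_matI) (auto simp: scalar_prod_def sum_conjugate conjugate_dist_mul mult.commute)

interpretation cnj: comm_ring_hom cnj
  by unfold_locales auto

lemma det_mat_adjoint:
  fixes A :: "complex mat"
  assumes "A \<in> carrier_mat n n"
  shows "det (mat_adjoint A) = cnj (det A)"
proof -
  have "mat_adjoint A = map_mat cnj (transpose_mat A)"
    by (rule eq_matI) auto
  then show ?thesis
    using assms by (simp add: det_transpose)
qed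

definition trace :: "'a :: comm_ring mat \<Rightarrow> 'a" where
  "trace A = (\<Sum>i<dim_row A. A $$ (i, i))"

lemma trace_mult_comm:
  assumes "A \<in> carrier_mat n m" "B \<in> carrier_mat m n"
  shows "trace (A * B) = trace (B * A)"
proof -
  have "trace (A * B) = (\<Sum>i<n. \<Sum>j<m. A $$ (i, j) * B $$ (j, i))"
    using assms by (auto simp: trace_def scalar_prod_def atLeast0LessThan)
  also have "\<dots> = (\<Sum>j<m. \<Sum>i<n. B $$ (j, i) * A $$ (i, j))"
    by (subst sum.swap) (simp add: mult.commute)
  also have "\<dots> = trace (B * A)"
    using assms by (auto simp: trace_def scalar_prod_def atLeast0LessThan)
  finally show ?thesis .
qed

lemma bij_betw_pick:
  assumes "finite S"
  shows "bij_betw (pick S) {0..<card S} S"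
proof -
  have inj: "inj_on (pick S) {0..<card S}"
    by (intro inj_onI) (metis atLeastLessThan_iff linorder_neqE_nat order_less_irrefl pick_mono_le)
  have sub: "pick S ` {0..<card S} \<subseteq> S"
    using pick_in_set_le by auto
  have "pick S ` {0..<card S} = S"
    using card_subset_eq[OF assms sub] card_image[OF inj] by simp
  then show ?thesis
    using inj by (simp add: bij_betw_def)
qed

lemma
  assumes "S \<subseteq> {0..<dim_col A}"
  shows submatrix_cols_carrier: "submatrix A UNIV S \<in> carrier_mat (dim_row A) (card S)"
    and submatrix_cols_index:
      "i < dim_row A \<Longrightarrow> j < card S \<Longrightarrow> submatrix A UNIV S $$ (i, j) = A $$ (i, pick S j)"
proof -
  have "{j. j < dim_col A \<and> j \<in> S} = S"
    using assms by auto
  then show "submatrix A UNIV S \<in> carrier_mat (dim_row A) (card S)"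
    "i < dim_row A \<Longrightarrow> j < card S \<Longrightarrow> submatrix A UNIV S $$ (i, j) = A $$ (i, pick S j)"
    by (simp_all add: submatrix_def pick_UNIV)
qed

lemma
  assumes "S \<subseteq> {0..<dim_row A}"
  shows submatrix_rows_carrier: "submatrix A S UNIV \<in> carrier_mat (card S) (dim_col A)"
    and submatrix_rows_index:
      "i < card S \<Longrightarrow> j < dim_col A \<Longrightarrow> submatrix A S UNIV $$ (i, j) = A $$ (pick S i, j)"
proof -
  have "{i. i < dim_row A \<and> i \<in> S} = S"
    using assms by auto
  then show "submatrix A S UNIV \<in> carrier_mat (card S) (dim_col A)"
    "i < card S \<Longrightarrow> j < dim_col A \<Longrightarrow> submatrix A S UNIV $$ (i, j) = A $$ (pick S i, j)"
    by (simp_all add: submatrix_def pick_UNIV)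
qed

lemma mat_adjoint_submatrix_rows:
  assumes S: "S \<subseteq> {0..<dim_row A}"
  shows "mat_adjoint (submatrix A S UNIV) = submatrix (mat_adjoint A) UNIV S"
proof (rule eq_matI)
  note carriers = submatrix_rows_carrier[OF S] submatrix_cols_carrier[of S "mat_adjoint A"]
  fix i j
  assume "i < dim_row (submatrix (mat_adjoint A) UNIV S)" "j < dim_col (submatrix (mat_adjoint A) UNIV S)"
  then have i: "i < dim_col A" and j: "j < card S"
    using carriers S by auto
  have "pick S j < dim_row A"
    using pick_in_set_le[OF j] S by auto
  then show "mat_adjoint (submatrix A S UNIV) $$ (i, j) = submatrix (mat_adjoint A) UNIV S $$ (i, j)"
    using carriers S i j by (simp add: submatrix_rows_index submatrix_cols_index)
qed (use submatrix_rows_carrier[OF S] submatrix_cols_carrier[of S "mat_adjoint A"] S in auto)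

section \<open>The Cauchy--Binet formula\<close>

lemma det_mult_eq_sum_PiE:
  fixes X Y :: "'a :: comm_ring_1 mat"
  assumes X: "X \<in> carrier_mat k n" and Y: "Y \<in> carrier_mat n k"
  shows "det (X * Y) = (\<Sum>f \<in> {0..<k} \<rightarrow>\<^sub>E {0..<n}.
    (\<Prod>i = 0..<k. X $$ (i, f i)) * det (mat k k (\<lambda>(i, j). Y $$ (f i, j))))"
proof -
  let ?K = "{0..<k}" and ?F = "{0..<k} \<rightarrow>\<^sub>E {0..<n}" and ?P = "{p. p permutes {0..<k}}"
  have XY: "X * Y \<in> carrier_mat k k"
    using X Y by simp
  have det_rows: "det (mat k k (\<lambda>(i, j). Y $$ (f i, j))) = (\<Sum>p\<in>?P. signof p * (\<Prod>i\<in>?K. Y $$ (f i, p i)))"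
    for f
    by (subst det_def'[of _ k]) (auto simp: permutes_in_image intro!: sum.cong prod.cong)
  have "det (X * Y) = (\<Sum>p\<in>?P. signof p * (\<Prod>i\<in>?K. \<Sum>j\<in>{0..<n}. X $$ (i, j) * Y $$ (j, p i)))"
    unfolding det_def'[OF XY] using X Y
    by (intro sum.cong refl arg_cong2[where f = "(*)"] prod.cong)
      (auto simp: permutes_in_image scalar_prod_def)
  also have "\<dots> = (\<Sum>p\<in>?P. signof p * (\<Sum>f\<in>?F. \<Prod>i\<in>?K. X $$ (i, f i) * Y $$ (f i, p i)))"
    by (subst prod_sum_PiE) auto
  also have "\<dots> = (\<Sum>p\<in>?P. \<Sum>f\<in>?F. signof p * ((\<Prod>i\<in>?K. X $$ (i, f i)) * (\<Prod>i\<in>?K. Y $$ (f i, p i))))"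
    by (simp only: sum_distrib_left prod.distrib)
  also have "\<dots> = (\<Sum>f\<in>?F. \<Sum>p\<in>?P. signof p * ((\<Prod>i\<in>?K. X $$ (i, f i)) * (\<Prod>i\<in>?K. Y $$ (f i, p i))))"
    by (rule sum.swap)
  also have "\<dots> = (\<Sum>f\<in>?F. (\<Prod>i\<in>?K. X $$ (i, f i)) * det (mat k k (\<lambda>(i, j). Y $$ (f i, j))))"
    unfolding det_rows sum_distrib_left by (intro sum.cong refl) (simp only: mult.left_commute)
  finally show ?thesis .
qed

lemma det_mat_rows_not_inj:
  assumes "\<not> inj_on f {0..<k}"
  shows "det (mat k k (\<lambda>(i, j). Y $$ (f i, j))) = 0"
proof -
  obtain i j where ij: "i < k" "j < k" "i \<noteq> j" "f i = f j"
    using assms unfolding inj_on_def by auto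
  show ?thesis
    by (rule det_identical_rows[OF _ ij(3,1,2)]) (use ij in auto)
qed

lemma det_submatrix_mult_eq_sum_permutes:
  fixes X Y :: "'a :: comm_ring_1 mat"
  assumes X: "X \<in> carrier_mat k n" and Y: "Y \<in> carrier_mat n k" and S: "S \<subseteq> {0..<n}" "card S = k"
  shows "det (submatrix X UNIV S) * det (submatrix Y S UNIV) = (\<Sum>p | p permutes {0..<k}.
    (\<Prod>i = 0..<k. X $$ (i, pick S (p i))) * det (mat k k (\<lambda>(i, j). Y $$ (pick S (p i), j))))"
proof -
  let ?K = "{0..<k}" and ?P = "{p. p permutes {0..<k}}"
  have SX: "submatrix X UNIV S \<in> carrier_mat k k" and SY: "submatrix Y S UNIV \<in> carrier_mat k k"
    using submatrix_cols_carrier[of S X] submatrix_rows_carrier[of S Y] S X Y by auto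
  have "(\<Prod>i\<in>?K. X $$ (i, pick S (p i))) * det (mat k k (\<lambda>(i, j). Y $$ (pick S (p i), j))) =
      signof p * (\<Prod>i\<in>?K. submatrix X UNIV S $$ (i, p i)) * det (submatrix Y S UNIV)"
    if p: "p permutes ?K" for p
  proof -
    have "mat k k (\<lambda>(i, j). Y $$ (pick S (p i), j)) = mat k k (\<lambda>(i, j). submatrix Y S UNIV $$ (p i, j))"
      using permutes_in_image[OF p] S Y by (intro eq_matI) (auto simp: submatrix_rows_index)
    moreover have "(\<Prod>i\<in>?K. X $$ (i, pick S (p i))) = (\<Prod>i\<in>?K. submatrix X UNIV S $$ (i, p i))"
      using permutes_in_image[OF p] S X by (intro prod.cong) (auto simp: submatrix_cols_index)
    ultimately show ?thesis
      using det_permute_rows[OF SY p] by (simp add: mult_ac)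
  qed
  then show ?thesis
    unfolding det_def'[OF SX] sum_distrib_right by (intro sum.cong) auto
qed

definition pick_perm :: "nat \<Rightarrow> (nat \<Rightarrow> nat) \<Rightarrow> nat \<Rightarrow> nat" where
  "pick_perm k f = (\<lambda>i. if i \<in> {0..<k} then the_inv_into {0..<k} (pick (f ` {0..<k})) (f i) else i)"

lemma permutes_the_inv_into_comp:
  assumes "bij_betw g K S" "bij_betw f K S"
  shows "(\<lambda>i. if i \<in> K then the_inv_into K g (f i) else i) permutes K"
proof (rule bij_imp_permutes)
  have "bij_betw (the_inv_into K g \<circ> f) K K"
    using assms bij_betw_the_inv_into bij_betw_trans by blast
  then show "bij_betw (\<lambda>i. if i \<in> K then the_inv_into K g (f i) else i) K K"
    by (rule bij_betw_cong[THEN iffD1, rotated]) simp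
qed simp

lemma bij_betw_pick_subset:
  assumes "S \<subseteq> {0..<n}" "card S = k"
  shows "bij_betw (pick S) {0..<k} S"
  using bij_betw_pick[of S] assms finite_subset by auto

lemma restrict_pick_comp_permutes:
  assumes S: "S \<subseteq> {0..<n}" "card S = k" and p: "p permutes {0..<k}"
  shows "restrict (pick S \<circ> p) {0..<k} ` {0..<k} = S"
    and "pick_perm k (restrict (pick S \<circ> p) {0..<k}) = p"
    and "restrict (pick S \<circ> p) {0..<k} \<in> {0..<k} \<rightarrow>\<^sub>E {0..<n}"
    and "inj_on (restrict (pick S \<circ> p) {0..<k}) {0..<k}"
proof -
  let ?K = "{0..<k}"
  note pick = bij_betw_pick_subset[OF S]
  have "restrict (pick S \<circ> p) ?K ` ?K = pick S ` p ` ?K"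
    by (auto simp: image_image)
  also have "\<dots> = S"
    using bij_betw_imp_surj_on[OF pick] permutes_image[OF p] by simp
  finally show img: "restrict (pick S \<circ> p) ?K ` ?K = S" .
  show "pick_perm k (restrict (pick S \<circ> p) ?K) = p"
  proof
    fix i
    show "pick_perm k (restrict (pick S \<circ> p) ?K) i = p i"
      using img pick permutes_in_image[OF p] permutes_not_in[OF p]
      by (auto simp: pick_perm_def the_inv_into_f_f bij_betw_def)
  qed
  show "restrict (pick S \<circ> p) ?K \<in> ?K \<rightarrow>\<^sub>E {0..<n}"
    using img S by auto
  have "inj_on (pick S \<circ> p) ?K"
    using permutes_image[OF p] bij_betw_imp_inj_on[OF pick]
    by (intro comp_inj_on permutes_inj_on[OF p]) simp
  then show "inj_on (restrict (pick S \<circ> p) ?K) ?K"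
    by (auto simp: inj_on_def)
qed

lemma pick_perm_inj:
  assumes f: "f \<in> {0..<k} \<rightarrow>\<^sub>E {0..<n}" "inj_on f {0..<k}"
  shows "pick_perm k f permutes {0..<k}"
    and "restrict (pick (f ` {0..<k}) \<circ> pick_perm k f) {0..<k} = f"
proof -
  let ?K = "{0..<k}"
  have "f ` ?K \<subseteq> {0..<n}" "card (f ` ?K) = k"
    using f by (auto simp: card_image)
  note pick = bij_betw_pick_subset[OF this]
  have "bij_betw f ?K (f ` ?K)"
    using f by (simp add: bij_betw_def)
  then show "pick_perm k f permutes ?K"
    unfolding pick_perm_def by (rule permutes_the_inv_into_comp[OF pick])
  show "restrict (pick (f ` ?K) \<circ> pick_perm k f) ?K = f"
    using f f_the_inv_into_f_bij_betw[OF pick]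
    by (auto simp: pick_perm_def PiE_def extensional_def)
qed

lemma bij_betw_subset_permutation_inj:
  "bij_betw (\<lambda>(S, p). restrict (pick S \<circ> p) {0..<k})
     (SIGMA S:{S. S \<subseteq> {0..<n} \<and> card S = k}. {p. p permutes {0..<k}})
     (({0..<k} \<rightarrow>\<^sub>E {0..<n}) \<inter> {f. inj_on f {0..<k}})"
proof (rule bij_betwI[where g = "\<lambda>f. (f ` {0..<k}, pick_perm k f)"])
  let ?K = "{0..<k}"
  let ?A = "SIGMA S:{S. S \<subseteq> {0..<n} \<and> card S = k}. {p. p permutes ?K}"
  let ?B = "(?K \<rightarrow>\<^sub>E {0..<n}) \<inter> {f. inj_on f ?K}"
  have in_A: "\<exists>S p. x = (S, p) \<and> S \<subseteq> {0..<n} \<and> card S = k \<and> p permutes ?K" if "x \<in> ?A" for x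
    using that by blast
  show "(\<lambda>(S, p). restrict (pick S \<circ> p) ?K) \<in> ?A \<rightarrow> ?B"
  proof
    fix x
    assume "x \<in> ?A"
    with in_A obtain S p where "x = (S, p)" "S \<subseteq> {0..<n}" "card S = k" "p permutes ?K"
      by blast
    then show "(case x of (S, p) \<Rightarrow> restrict (pick S \<circ> p) ?K) \<in> ?B"
      using restrict_pick_comp_permutes(3,4) by simp
  qed
  show "((case x of (S, p) \<Rightarrow> restrict (pick S \<circ> p) ?K) ` ?K,
      pick_perm k (case x of (S, p) \<Rightarrow> restrict (pick S \<circ> p) ?K)) = x" if "x \<in> ?A" for x
  proof -
    from in_A[OF that] obtain S p where "x = (S, p)" "S \<subseteq> {0..<n}" "card S = k" "p permutes ?K"
      by blast
    then show ?thesis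
      using restrict_pick_comp_permutes(1,2) by simp
  qed
  show "(\<lambda>f. (f ` ?K, pick_perm k f)) \<in> ?B \<rightarrow> ?A"
    using pick_perm_inj(1) by (auto simp: card_image)
  show "(case (f ` ?K, pick_perm k f) of (S, p) \<Rightarrow> restrict (pick S \<circ> p) ?K) = f" if "f \<in> ?B" for f
    using pick_perm_inj(2)[of f k n] that by simp
qed

theorem Cauchy_Binet:
  fixes X Y :: "'a :: comm_ring_1 mat"
  assumes X: "X \<in> carrier_mat k n" and Y: "Y \<in> carrier_mat n k"
  shows "det (X * Y) =
    (\<Sum>S | S \<subseteq> {0..<n} \<and> card S = k. det (submatrix X UNIV S) * det (submatrix Y S UNIV))"
proof -
  let ?K = "{0..<k}" and ?F = "{0..<k} \<rightarrow>\<^sub>E {0..<n}" and ?P = "{p. p permutes {0..<k}}"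
  let ?Sk = "{S. S \<subseteq> {0..<n} \<and> card S = k}"
  define h where "h f = (\<Prod>i = 0..<k. X $$ (i, f i)) * det (mat k k (\<lambda>(i, j). Y $$ (f i, j)))" for f
  have "det (X * Y) = (\<Sum>f\<in>?F. h f)"
    unfolding h_def by (rule det_mult_eq_sum_PiE[OF X Y])
  also have "\<dots> = (\<Sum>f \<in> ?F \<inter> {f. inj_on f ?K}. h f)"
    by (rule sum.mono_neutral_right) (auto simp: h_def det_mat_rows_not_inj intro: finite_PiE)
  also have "\<dots> = (\<Sum>x \<in> (SIGMA S:?Sk. ?P). h ((\<lambda>(S, p). restrict (pick S \<circ> p) ?K) x))"
    by (rule sum.reindex_bij_betw[OF bij_betw_subset_permutation_inj, symmetric])
  also have "\<dots> = (\<Sum>S\<in>?Sk. \<Sum>p\<in>?P. h (restrict (pick S \<circ> p) ?K))"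
    by (subst sum.Sigma) (auto simp: prod.case_distrib intro: finite_permutations)
  also have "\<dots> = (\<Sum>S\<in>?Sk. \<Sum>p\<in>?P.
      (\<Prod>i = 0..<k. X $$ (i, pick S (p i))) * det (mat k k (\<lambda>(i, j). Y $$ (pick S (p i), j))))"
    unfolding h_def by (intro sum.cong refl arg_cong2[where f = "(*)"] prod.cong arg_cong[where f = det] eq_matI) auto
  also have "\<dots> = (\<Sum>S\<in>?Sk. det (submatrix X UNIV S) * det (submatrix Y S UNIV))"
    using det_submatrix_mult_eq_sum_permutes[OF X Y] by simp
  finally show ?thesis .
qed

section \<open>Gram matrices and compressions\<close>

lemma mat_adjoint_mult_vec_cscalar_prod:
  fixes N :: "'a :: conjugatable_field mat"
  assumes N: "N \<in> carrier_mat n m" and v: "v \<in> carrier_vec m" and w: "w \<in> carrier_vec n"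
  shows "(mat_adjoint N *\<^sub>v w) \<bullet>c v = w \<bullet>c (N *\<^sub>v v)"
proof -
  have "(mat_adjoint N *\<^sub>v w) \<bullet>c v = (\<Sum>j<m. (\<Sum>i<n. conjugate (N $$ (i, j)) * w $ i) * conjugate (v $ j))"
    using assms by (simp add: scalar_prod_def atLeast0LessThan)
  also have "\<dots> = (\<Sum>j<m. \<Sum>i<n. w $ i * (conjugate (N $$ (i, j)) * conjugate (v $ j)))"
    by (intro sum.cong refl) (simp add: sum_distrib_right mult.assoc mult.left_commute)
  also have "\<dots> = (\<Sum>i<n. \<Sum>j<m. w $ i * (conjugate (N $$ (i, j)) * conjugate (v $ j)))"
    by (rule sum.swap)
  also have "\<dots> = (\<Sum>i<n. w $ i * conjugate (\<Sum>j<m. N $$ (i, j) * v $ j))"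
    by (simp add: sum_conjugate conjugate_dist_mul sum_distrib_left)
  also have "\<dots> = w \<bullet>c (N *\<^sub>v v)"
    using assms by (simp add: scalar_prod_def atLeast0LessThan)
  finally show ?thesis .
qed

lemma gram_quadratic_form:
  fixes N :: "'a :: conjugatable_field mat"
  assumes N: "N \<in> carrier_mat n m" and v: "v \<in> carrier_vec m"
  shows "(mat_adjoint N * N *\<^sub>v v) \<bullet>c v = (N *\<^sub>v v) \<bullet>c (N *\<^sub>v v)"
proof -
  have "mat_adjoint N * N *\<^sub>v v = mat_adjoint N *\<^sub>v (N *\<^sub>v v)"
    using N v by (intro assoc_mult_mat_vec[of _ m n]) auto
  then show ?thesis
    using mat_adjoint_mult_vec_cscalar_prod[OF N v, of "N *\<^sub>v v"] N v by simp
qed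

lemma det_gram_nonzero:
  fixes P :: "complex mat"
  assumes P: "P \<in> carrier_mat n k"
    and inj: "\<And>v. v \<in> carrier_vec k \<Longrightarrow> P *\<^sub>v v = 0\<^sub>v n \<Longrightarrow> v = 0\<^sub>v k"
  shows "det (mat_adjoint P * P) \<noteq> 0"
proof
  have G: "mat_adjoint P * P \<in> carrier_mat k k"
    using P by auto
  assume "det (mat_adjoint P * P) = 0"
  then obtain v where v: "v \<in> carrier_vec k" "v \<noteq> 0\<^sub>v k" "mat_adjoint P * P *\<^sub>v v = 0\<^sub>v k"
    using det_0_iff_vec_prod_zero_field[OF G] by auto
  have "(P *\<^sub>v v) \<bullet>c (P *\<^sub>v v) = 0"
    using gram_quadratic_form[OF P v(1)] v by simp
  then have "P *\<^sub>v v = 0\<^sub>v n"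
    using conjugate_square_eq_0_vec[of "P *\<^sub>v v" n] P v by simp
  then show False
    using inj v by auto
qed

lemma gram_inverse_exists:
  fixes P :: "complex mat"
  assumes P: "P \<in> carrier_mat n k"
    and inj: "\<And>v. v \<in> carrier_vec k \<Longrightarrow> P *\<^sub>v v = 0\<^sub>v n \<Longrightarrow> v = 0\<^sub>v k"
  obtains Gi where "Gi \<in> carrier_mat k k"
    "mat_adjoint P * P * Gi = 1\<^sub>m k" "Gi * (mat_adjoint P * P) = 1\<^sub>m k"
proof -
  let ?G = "mat_adjoint P * P"
  have G: "?G \<in> carrier_mat k k"
    using P by auto
  show ?thesis
    using adj_mat[OF G] det_gram_nonzero[OF P inj]
    by (intro that[of "(1 / det ?G) \<cdot>\<^sub>m adj_mat ?G"])
      (auto simp: mult_smult_distrib[OF G] mult_smult_assoc_mat[OF _ G])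
qed

text \<open>On \<open>complex\<close>, \<open>\<le>\<close> is the partial order of \<open>HOL-Library.Complex_Order\<close>:
  \<open>0 \<le> \<mu>\<close> means that \<open>\<mu>\<close> is a nonnegative real number.\<close>

lemma nonneg_complex_if_mult_pos:
  fixes \<mu> p q :: complex
  assumes "0 \<le> p" "0 < q" "p = \<mu> * q"
  shows "0 \<le> \<mu>"
proof -
  have "\<mu> = p / q"
    using assms by auto
  then show ?thesis
    using assms by (auto simp: less_eq_complex_def less_complex_def Re_divide Im_divide zero_le_mult_iff)
qed

lemma eigenvalue_gram_quotient_nonneg:
  fixes P N H :: "complex mat"
  assumes P: "P \<in> carrier_mat n k" and N: "N \<in> carrier_mat m k" and H: "H \<in> carrier_mat k k"
    and inj: "\<And>v. v \<in> carrier_vec k \<Longrightarrow> P *\<^sub>v v = 0\<^sub>v n \<Longrightarrow> v = 0\<^sub>v k"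
    and GH: "mat_adjoint P * P * H = mat_adjoint N * N"
    and ev: "eigenvalue H \<mu>"
  shows "0 \<le> \<mu>"
proof -
  obtain v where v: "v \<in> carrier_vec k" "v \<noteq> 0\<^sub>v k" "H *\<^sub>v v = \<mu> \<cdot>\<^sub>v v"
    using ev H unfolding eigenvalue_def eigenvector_def by auto
  have G: "mat_adjoint P * P \<in> carrier_mat k k"
    using P by auto
  have "(N *\<^sub>v v) \<bullet>c (N *\<^sub>v v) = (mat_adjoint N * N *\<^sub>v v) \<bullet>c v"
    by (rule gram_quadratic_form[OF N v(1), symmetric])
  also have "mat_adjoint N * N *\<^sub>v v = mat_adjoint P * P * H *\<^sub>v v"
    by (simp add: GH)
  also have "\<dots> = mat_adjoint P * P *\<^sub>v (\<mu> \<cdot>\<^sub>v v)"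
    using assoc_mult_mat_vec[OF G H v(1)] v(3) by simp
  also have "\<dots> = \<mu> \<cdot>\<^sub>v (mat_adjoint P * P *\<^sub>v v)"
    by (rule mult_mat_vec[OF G v(1)])
  also have "(\<mu> \<cdot>\<^sub>v (mat_adjoint P * P *\<^sub>v v)) \<bullet>c v = \<mu> * ((mat_adjoint P * P *\<^sub>v v) \<bullet>c v)"
    using G v(1) by (intro smult_scalar_prod_distrib[of _ k]) auto
  also have "\<dots> = \<mu> * ((P *\<^sub>v v) \<bullet>c (P *\<^sub>v v))"
    by (simp add: gram_quadratic_form[OF P v(1)])
  finally have eq: "(N *\<^sub>v v) \<bullet>c (N *\<^sub>v v) = \<mu> * ((P *\<^sub>v v) \<bullet>c (P *\<^sub>v v))" .
  have "P *\<^sub>v v \<in> carrier_vec n" "P *\<^sub>v v \<noteq> 0\<^sub>v n"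
    using P v inj by auto
  then have "0 < (P *\<^sub>v v) \<bullet>c (P *\<^sub>v v)"
    using conjugate_square_greater_0_vec by blast
  then show ?thesis
    by (rule nonneg_complex_if_mult_pos[OF conjugate_square_ge_0_vec _ eq])
qed

lemma mat_adjoint_one [simp]: "mat_adjoint (1\<^sub>m n :: complex mat) = 1\<^sub>m n"
  by (rule eq_matI) auto

lemma cscalar_prod_projection_le:
  fixes R :: "complex mat"
  assumes R: "R \<in> carrier_mat n n" and herm: "mat_adjoint R = R" and idem: "R * R = R"
    and x: "x \<in> carrier_vec n"
  shows "(R *\<^sub>v x) \<bullet>c (R *\<^sub>v x) \<le> x \<bullet>c x"
proof -
  define y z where "y = R *\<^sub>v x" and "z = x - R *\<^sub>v x"
  have y: "y \<in> carrier_vec n" and z: "z \<in> carrier_vec n"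
    using R x by (auto simp: y_def z_def)
  have "R *\<^sub>v z = R *\<^sub>v x - R *\<^sub>v (R *\<^sub>v x)"
    unfolding z_def using R x by (intro mult_minus_distrib_mat_vec) auto
  also have "R *\<^sub>v (R *\<^sub>v x) = R *\<^sub>v x"
    using assoc_mult_mat_vec[OF R R x] idem by simp
  finally have Rz: "R *\<^sub>v z = 0\<^sub>v n"
    using R x by auto
  have "y \<bullet>c z = x \<bullet>c (R *\<^sub>v z)"
    unfolding y_def using mat_adjoint_mult_vec_cscalar_prod[OF R z x] herm by simp
  then have yz: "y \<bullet>c z = 0"
    using Rz x by simp
  have "z \<bullet>c y = (R *\<^sub>v z) \<bullet>c x"
    unfolding y_def using mat_adjoint_mult_vec_cscalar_prod[OF R x z] herm by simp
  then have zy: "z \<bullet>c y = 0"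
    using Rz x by simp
  have "x = y + z"
    using R x by (intro eq_vecI) (auto simp: y_def z_def)
  then have "x \<bullet>c x = y \<bullet>c y + y \<bullet>c z + (z \<bullet>c y + z \<bullet>c z)"
    using y z
    by (simp add: conjugate_add_vec[OF y z] add_scalar_prod_distrib[of _ n] scalar_prod_add_distrib[of _ n])
  then have "x \<bullet>c x = y \<bullet>c y + z \<bullet>c z"
    using yz zy by simp
  then show ?thesis
    unfolding y_def[symmetric] using conjugate_square_ge_0_vec[of z] by simp
qed

lemma cscalar_prod_self:
  fixes v :: "complex vec"
  shows "v \<bullet>c v = of_real (\<Sum>i<dim_vec v. (cmod (v $ i))\<^sup>2)"
proof -
  have "of_real (\<Sum>i<dim_vec v. (cmod (v $ i))\<^sup>2) = (\<Sum>i<dim_vec v. v $ i * cnj (v $ i))"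
    by (simp only: of_real_sum complex_norm_square)
  then show ?thesis
    by (simp add: scalar_prod_def atLeast0LessThan)
qed

lemma trace_gram:
  fixes C :: "'a :: conjugatable_field mat"
  assumes "C \<in> carrier_mat n m"
  shows "trace (mat_adjoint C * C) = (\<Sum>j<m. col C j \<bullet>c col C j)"
  using assms by (auto simp: trace_def scalar_prod_def mult.commute intro!: sum.cong)

lemma cmod_le_if_nonneg_le_of_real:
  fixes z :: complex
  assumes "0 \<le> z" "z \<le> of_real r"
  shows "cmod z \<le> r"
  using assms by (auto simp: less_eq_complex_def cmod_eq_Re)

lemma gram_projection:
  fixes P Gi :: "complex mat"
  assumes P: "P \<in> carrier_mat n k" and Gi: "Gi \<in> carrier_mat k k"
    and right: "mat_adjoint P * P * Gi = 1\<^sub>m k" and left: "Gi * (mat_adjoint P * P) = 1\<^sub>m k"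
  shows "mat_adjoint (P * (Gi * mat_adjoint P)) = P * (Gi * mat_adjoint P)"
    and "P * (Gi * mat_adjoint P) * (P * (Gi * mat_adjoint P)) = P * (Gi * mat_adjoint P)"
proof -
  let ?G = "mat_adjoint P * P" and ?Q = "Gi * mat_adjoint P"
  have aP: "mat_adjoint P \<in> carrier_mat k n" and G: "?G \<in> carrier_mat k k" and Q: "?Q \<in> carrier_mat k n"
    using P Gi by auto
  have aG: "mat_adjoint ?G = ?G"
    using mat_adjoint_mult[OF aP P] by simp
  have inv: "mat_adjoint Gi * ?G = 1\<^sub>m k"
    using mat_adjoint_mult[OF G Gi] right aG by simp
  have aGi: "mat_adjoint Gi \<in> carrier_mat k k"
    using Gi by simp
  then have "mat_adjoint Gi = mat_adjoint Gi * (?G * Gi)"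
    using right by (simp add: right_mult_one_mat)
  also have "\<dots> = mat_adjoint Gi * ?G * Gi"
    using assoc_mult_mat[OF aGi G Gi] by simp
  also have "\<dots> = Gi"
    using Gi inv by simp
  finally have "mat_adjoint Gi = Gi" .
  then have "mat_adjoint ?Q = P * Gi"
    using mat_adjoint_mult[OF Gi aP] by simp
  then show "mat_adjoint (P * ?Q) = P * ?Q"
    using mat_adjoint_mult[OF P Q] assoc_mult_mat[OF P Gi aP] by simp
  have QP: "?Q * P = 1\<^sub>m k"
    using assoc_mult_mat[OF Gi aP P] left by simp
  have "?Q * (P * ?Q) = ?Q * P * ?Q"
    using assoc_mult_mat[OF Q P Q] by simp
  also have "\<dots> = ?Q"
    using QP left_mult_one_mat[OF Q] by simp
  finally have "?Q * (P * ?Q) = ?Q" .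
  then show "P * ?Q * (P * ?Q) = P * ?Q"
    using assoc_mult_mat[of P n k ?Q n "P * ?Q" n] P Q by simp
qed

lemma trace_projection_gram_le:
  fixes R B :: "complex mat"
  assumes R: "R \<in> carrier_mat n n" and herm: "mat_adjoint R = R" and idem: "R * R = R"
    and B: "B \<in> carrier_mat n m"
  shows "cmod (trace (mat_adjoint (R * B) * (R * B))) \<le> (\<Sum>i<n. \<Sum>j<m. (cmod (B $$ (i, j)))\<^sup>2)"
proof -
  have "trace (mat_adjoint (R * B) * (R * B)) = (\<Sum>j<m. col (R * B) j \<bullet>c col (R * B) j)"
    using R B by (intro trace_gram) auto
  also have "\<dots> = (\<Sum>j<m. (R *\<^sub>v col B j) \<bullet>c (R *\<^sub>v col B j))"
    by (intro sum.cong refl) (simp add: col_mult2[OF R B])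
  finally have tr: "trace (mat_adjoint (R * B) * (R * B)) = (\<Sum>j<m. (R *\<^sub>v col B j) \<bullet>c (R *\<^sub>v col B j))" .
  have "trace (mat_adjoint (R * B) * (R * B)) \<le> (\<Sum>j<m. col B j \<bullet>c col B j)"
    unfolding tr using R B herm idem by (intro sum_mono cscalar_prod_projection_le) auto
  also have "\<dots> = of_real (\<Sum>j<m. \<Sum>i<n. (cmod (B $$ (i, j)))\<^sup>2)"
    using B by (simp add: cscalar_prod_self)
  finally have "cmod (trace (mat_adjoint (R * B) * (R * B))) \<le> (\<Sum>j<m. \<Sum>i<n. (cmod (B $$ (i, j)))\<^sup>2)"
    using tr by (intro cmod_le_if_nonneg_le_of_real) (auto intro: sum_nonneg)
  moreover have "(\<Sum>j<m. \<Sum>i<n. (cmod (B $$ (i, j)))\<^sup>2) = (\<Sum>i<n. \<Sum>j<m. (cmod (B $$ (i, j)))\<^sup>2)"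
    by (rule sum.swap)
  ultimately show ?thesis
    by simp
qed

lemma trace_compression_le:
  fixes P B Gi :: "complex mat"
  assumes P: "P \<in> carrier_mat n k" and B: "B \<in> carrier_mat n m" and Gi: "Gi \<in> carrier_mat k k"
    and right: "mat_adjoint P * P * Gi = 1\<^sub>m k" and left: "Gi * (mat_adjoint P * P) = 1\<^sub>m k"
  shows "cmod (trace (Gi * (mat_adjoint P * B * mat_adjoint (mat_adjoint P * B))))
    \<le> (\<Sum>i<n. \<Sum>j<m. (cmod (B $$ (i, j)))\<^sup>2)"
proof -
  let ?X = "mat_adjoint P * B" and ?Q = "Gi * mat_adjoint P"
  \<comment> \<open>the orthogonal projection onto the column space of \<open>P\<close>\<close>
  define R where "R = P * ?Q"
  have aP: "mat_adjoint P \<in> carrier_mat k n" and aB: "mat_adjoint B \<in> carrier_mat m n"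
    and X: "?X \<in> carrier_mat k m" and Q: "?Q \<in> carrier_mat k n" and R: "R \<in> carrier_mat n n"
    using P B Gi by (auto simp: R_def)
  have herm: "mat_adjoint R = R" and idem: "R * R = R"
    unfolding R_def using gram_projection[OF P Gi right left] by auto
  have XaB: "?X * mat_adjoint B \<in> carrier_mat k n" and GXaB: "Gi * (?X * mat_adjoint B) \<in> carrier_mat k n"
    using X aB Gi by auto
  have "Gi * (?X * mat_adjoint ?X) = Gi * (?X * mat_adjoint B) * P"
    using mat_adjoint_mult[OF aP B] assoc_mult_mat[OF X aB P] assoc_mult_mat[OF Gi XaB P] by simp
  then have "trace (Gi * (?X * mat_adjoint ?X)) = trace (P * (Gi * (?X * mat_adjoint B)))"
    using trace_mult_comm[OF GXaB P] by simp
  also have "P * (Gi * (?X * mat_adjoint B)) = R * B * mat_adjoint B"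
    using assoc_mult_mat[OF aP B aB] assoc_mult_mat[OF Gi aP, of "B * mat_adjoint B" n]
      assoc_mult_mat[OF P Q, of "B * mat_adjoint B" n] assoc_mult_mat[OF R B aB] B aB
    by (simp add: R_def)
  also have "trace (R * B * mat_adjoint B) = trace (mat_adjoint B * (R * B))"
    using R B aB by (intro trace_mult_comm) auto
  also have "mat_adjoint B * (R * B) = mat_adjoint (R * B) * (R * B)"
    using mat_adjoint_mult[OF R B] herm idem assoc_mult_mat[OF aB R, of "R * B" m]
      assoc_mult_mat[OF R R B] R B by simp
  finally show ?thesis
    using trace_projection_gram_le[OF R herm idem B] by simp
qed

section \<open>Determinant and trace\<close>

lemma prod_le_mean_power:
  fixes x :: "'b \<Rightarrow> real"
  assumes I: "finite I" "I \<noteq> {}" and x: "\<And>i. i \<in> I \<Longrightarrow> 0 \<le> x i"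
  shows "(\<Prod>i\<in>I. x i) \<le> ((\<Sum>i\<in>I. x i) / card I) ^ card I"
proof -
  define m where "m = (\<Sum>i\<in>I. x i) / card I"
  have card: "card I > 0"
    using I card_gt_0_iff by blast
  have "0 \<le> m"
    unfolding m_def using x by (auto intro!: sum_nonneg divide_nonneg_nonneg)
  show ?thesis
  proof (cases "m = 0")
    case True
    then have "sum x I = 0"
      using card by (simp add: m_def)
    then have "\<forall>i\<in>I. x i = 0"
      using sum_nonneg_eq_0_iff[OF I(1) x] by simp
    then show ?thesis
      using I True by (simp add: m_def[symmetric])
  next
    case False
    with \<open>0 \<le> m\<close> have m: "m > 0"
      by simp
    \<comment> \<open>Apply \<open>t \<le> exp (t - 1)\<close> to each \<open>x i / m\<close>; the exponents sum to zero.\<close>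
    have "(\<Prod>i\<in>I. x i / m) \<le> (\<Prod>i\<in>I. exp (x i / m - 1))"
    proof (rule prod_mono)
      fix i
      assume "i \<in> I"
      then show "0 \<le> x i / m \<and> x i / m \<le> exp (x i / m - 1)"
        using x m exp_ge_add_one_self[of "x i / m - 1"] by auto
    qed
    also have "\<dots> = exp (\<Sum>i\<in>I. x i / m - 1)"
      by (simp add: exp_sum I(1))
    also have "(\<Sum>i\<in>I. x i / m - 1) = (\<Sum>i\<in>I. x i) / m - card I"
      by (simp add: sum_subtractf sum_divide_distrib)
    also have "\<dots> = 0"
      using m card by (auto simp: m_def)
    finally have "(\<Prod>i\<in>I. x i) / m ^ card I \<le> 1"
      by (simp add: prod_dividef)
    then show ?thesis
      using m by (simp add: m_def[symmetric])
  qed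
qed

lemma trace_similar_mat_wit:
  fixes A B :: "'a :: comm_ring_1 mat"
  assumes A: "A \<in> carrier_mat n n" and sim: "similar_mat_wit A B P Q"
  shows "trace A = trace B"
proof -
  from similar_mat_witD2[OF A sim] have B: "B \<in> carrier_mat n n" and P: "P \<in> carrier_mat n n"
    and Q: "Q \<in> carrier_mat n n" and QP: "Q * P = 1\<^sub>m n" and APBQ: "A = P * B * Q"
    by auto
  have "trace A = trace (P * (B * Q))"
    using APBQ assoc_mult_mat[OF P B Q] by simp
  also have "\<dots> = trace (B * Q * P)"
    using P B Q by (intro trace_mult_comm) auto
  also have "B * Q * P = B"
    using assoc_mult_mat[OF B Q P] QP B by simp
  finally show ?thesis .
qed

lemma det_le_trace_power:
  fixes H :: "complex mat"
  assumes H: "H \<in> carrier_mat k k" and k: "0 < k" and ev: "\<And>\<mu>. eigenvalue H \<mu> \<Longrightarrow> 0 \<le> \<mu>"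
  shows "cmod (det H) \<le> (cmod (trace H) / k) ^ k"
proof -
  obtain as where cp: "char_poly H = (\<Prod>a\<leftarrow>as. [:- a, 1:])" and len: "length as = k"
    using char_poly_factorized[OF H] by auto
  obtain U P Q where "schur_decomposition H as = (U, P, Q)"
    by (cases "schur_decomposition H as") auto
  from schur_decomposition[OF H cp this] have sim: "similar_mat_wit H U P Q"
    and ut: "upper_triangular U" and diag: "diag_mat U = as"
    by auto
  have U: "U \<in> carrier_mat k k"
    using similar_mat_witD2[OF H sim] by auto
  define x where "x i = Re (as ! i)" for i
  have as_x: "as ! i = of_real (x i)" and x0: "0 \<le> x i" if "i < k" for i
  proof -
    have "poly (char_poly H) (as ! i) = 0"
      unfolding cp using that len by (intro linear_poly_root) simp
    then have "0 \<le> as ! i"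
      using ev eigenvalue_root_char_poly[OF H] by simp
    then show "as ! i = of_real (x i)" "0 \<le> x i"
      by (auto simp: x_def less_eq_complex_def complex_eq_iff)
  qed
  have "det H = prod_list as"
    using det_similar[of H U] sim det_upper_triangular[OF ut U] diag
    unfolding similar_mat_def by auto
  also have "\<dots> = (\<Prod>i<k. of_real (x i))"
    using len as_x by (auto simp: prod.list_conv_set_nth atLeast0LessThan intro!: prod.cong)
  finally have det: "cmod (det H) = (\<Prod>i<k. x i)"
    using x0 by (auto simp flip: prod_norm intro!: prod.cong)
  have "trace H = (\<Sum>i<k. U $$ (i, i))"
    using trace_similar_mat_wit[OF H sim] U by (simp add: trace_def)
  also have "\<dots> = of_real (\<Sum>i<k. x i)"
    using diag U as_x by (auto simp: diag_mat_def intro!: sum.cong)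
  moreover have "0 \<le> (\<Sum>i<k. x i)"
    using x0 by (auto intro: sum_nonneg)
  ultimately have tr: "cmod (trace H) = (\<Sum>i<k. x i)"
    by (simp del: of_real_sum)
  show ?thesis
    unfolding det tr using prod_le_mean_power[of "{..<k}" x] k x0 by (simp add: lessThan_empty_iff)
qed

lemma det_compression_le:
  fixes P B :: "complex mat"
  assumes P: "P \<in> carrier_mat n k" and B: "B \<in> carrier_mat n m" and k: "0 < k"
    and inj: "\<And>v. v \<in> carrier_vec k \<Longrightarrow> P *\<^sub>v v = 0\<^sub>v n \<Longrightarrow> v = 0\<^sub>v k"
  shows "cmod (det (mat_adjoint P * B * mat_adjoint (mat_adjoint P * B)))
    \<le> ((\<Sum>i<n. \<Sum>j<m. (cmod (B $$ (i, j)))\<^sup>2) / k) ^ k * cmod (det (mat_adjoint P * P))"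
proof -
  let ?G = "mat_adjoint P * P" and ?X = "mat_adjoint P * B"
  let ?F = "\<Sum>i<n. \<Sum>j<m. (cmod (B $$ (i, j)))\<^sup>2"
  obtain Gi where Gi: "Gi \<in> carrier_mat k k" and right: "?G * Gi = 1\<^sub>m k" and left: "Gi * ?G = 1\<^sub>m k"
    using gram_inverse_exists[OF P inj] by blast
  \<comment> \<open>\<open>H\<close> is the compression of \<open>B B^*\<close> to the column space of \<open>P\<close>, written in the basis
    formed by the columns of \<open>P\<close>.\<close>
  define H where "H = Gi * (?X * mat_adjoint ?X)"
  have G: "?G \<in> carrier_mat k k" and X: "?X \<in> carrier_mat k m"
    and K: "?X * mat_adjoint ?X \<in> carrier_mat k k" and H: "H \<in> carrier_mat k k"
    using P B Gi by (auto simp: H_def)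
  have GH: "?G * H = ?X * mat_adjoint ?X"
    using assoc_mult_mat[OF G Gi K] right left_mult_one_mat[OF K] by (simp add: H_def)
  have "0 \<le> \<mu>" if "eigenvalue H \<mu>" for \<mu>
    using GH X by (intro eigenvalue_gram_quotient_nonneg[OF P _ H inj _ that, of "mat_adjoint ?X" m]) auto
  then have "cmod (det H) \<le> (cmod (trace H) / k) ^ k"
    by (rule det_le_trace_power[OF H k])
  also have "\<dots> \<le> (?F / k) ^ k"
    using trace_compression_le[OF P B Gi right left] by (intro power_mono divide_right_mono) (auto simp: H_def)
  finally have "cmod (det ?G) * cmod (det H) \<le> cmod (det ?G) * (?F / k) ^ k"
    by (intro mult_left_mono) auto
  then show ?thesis
    using GH det_mult[OF G H] by (simp add: norm_mult mult.commute)
qed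

section \<open>Weighted sums of minors\<close>

lemma sum_mult_le_sqrt_sum_squares:
  fixes a b :: "'b \<Rightarrow> real"
  shows "(\<Sum>i\<in>I. a i * b i) \<le> sqrt (\<Sum>i\<in>I. (a i)\<^sup>2) * sqrt (\<Sum>i\<in>I. (b i)\<^sup>2)"
proof -
  have "0 \<le> (\<Sum>i\<in>I. \<Sum>j\<in>I. (a i * b j - a j * b i)\<^sup>2)"
    by (intro sum_nonneg) auto
  also have "\<dots> = (\<Sum>i\<in>I. \<Sum>j\<in>I. (a i)\<^sup>2 * (b j)\<^sup>2) + (\<Sum>i\<in>I. \<Sum>j\<in>I. (b i)\<^sup>2 * (a j)\<^sup>2)
      - 2 * (\<Sum>i\<in>I. \<Sum>j\<in>I. (a i * b i) * (a j * b j))"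
    by (simp add: sum_subtractf sum.distrib sum_distrib_left power2_eq_square algebra_simps)
  also have "\<dots> = 2 * ((\<Sum>i\<in>I. (a i)\<^sup>2) * (\<Sum>i\<in>I. (b i)\<^sup>2)) - 2 * (\<Sum>i\<in>I. a i * b i)\<^sup>2"
    unfolding sum_product[symmetric] power2_eq_square by simp
  finally have "(\<Sum>i\<in>I. a i * b i)\<^sup>2 \<le> (\<Sum>i\<in>I. (a i)\<^sup>2) * (\<Sum>i\<in>I. (b i)\<^sup>2)"
    by simp
  then have "\<bar>\<Sum>i\<in>I. a i * b i\<bar> \<le> sqrt ((\<Sum>i\<in>I. (a i)\<^sup>2) * (\<Sum>i\<in>I. (b i)\<^sup>2))"
    using real_sqrt_le_mono by fastforce
  then show ?thesis
    by (simp add: real_sqrt_mult)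
qed

lemma det_gram_eq_sum_minors:
  fixes X :: "complex mat"
  assumes X: "X \<in> carrier_mat k n"
  shows "det (X * mat_adjoint X) =
    of_real (\<Sum>S | S \<subseteq> {0..<n} \<and> card S = k. (cmod (det (submatrix X UNIV S)))\<^sup>2)"
proof -
  have "det (X * mat_adjoint X) =
      (\<Sum>S | S \<subseteq> {0..<n} \<and> card S = k. det (submatrix X UNIV S) * det (submatrix (mat_adjoint X) S UNIV))"
    using X by (intro Cauchy_Binet) auto
  also have "\<dots> = (\<Sum>S | S \<subseteq> {0..<n} \<and> card S = k. of_real ((cmod (det (submatrix X UNIV S)))\<^sup>2))"
  proof (intro sum.cong refl)
    fix S
    assume "S \<in> {S. S \<subseteq> {0..<n} \<and> card S = k}"
    then have S: "S \<subseteq> {0..<dim_row (mat_adjoint X)}" and card: "card S = k"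
      using X by auto
    have sub: "submatrix X UNIV S \<in> carrier_mat k k"
      using submatrix_cols_carrier[of S X] S card X by auto
    have "submatrix (mat_adjoint X) S UNIV = mat_adjoint (submatrix X UNIV S)"
      using mat_adjoint_submatrix_rows[OF S] by (metis mat_adjoint_adjoint)
    then show "det (submatrix X UNIV S) * det (submatrix (mat_adjoint X) S UNIV) =
        of_real ((cmod (det (submatrix X UNIV S)))\<^sup>2)"
      using det_mat_adjoint[OF sub] complex_norm_square[of "det (submatrix X UNIV S)"] by simp
  qed
  finally show ?thesis
    by simp
qed

lemma cmod_det_gram_eq_sum_minors:
  fixes P :: "complex mat"
  assumes P: "P \<in> carrier_mat n k"
  shows "cmod (det (mat_adjoint P * P)) =
    (\<Sum>S | S \<subseteq> {0..<n} \<and> card S = k. (cmod (det (submatrix P S UNIV)))\<^sup>2)"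
proof -
  have aP: "mat_adjoint P \<in> carrier_mat k n"
    using P by simp
  have "cmod (det (submatrix (mat_adjoint P) UNIV S)) = cmod (det (submatrix P S UNIV))"
    if "S \<subseteq> {0..<n}" "card S = k" for S
  proof -
    have sub: "submatrix P S UNIV \<in> carrier_mat k k"
      using submatrix_rows_carrier[of S P] that P by auto
    have "submatrix (mat_adjoint P) UNIV S = mat_adjoint (submatrix P S UNIV)"
      using mat_adjoint_submatrix_rows[of S P] that P by simp
    then show ?thesis
      using det_mat_adjoint[OF sub] by simp
  qed
  then show ?thesis
    using det_gram_eq_sum_minors[OF aP] by (simp del: of_real_sum of_real_power add: sum_nonneg)
qed

lemma det_mat_diag: "det (mat_diag n f) = (\<Prod>i<n. f i)"
proof -
  have "upper_triangular (mat_diag n f)"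
    by (auto simp: upper_triangular_def mat_diag_def)
  then show ?thesis
    by (simp add: det_upper_triangular[of _ n] prod_list_diag_prod mat_diag_def atLeast0LessThan)
qed

lemma submatrix_rows_mat_diag_mult:
  assumes P: "P \<in> carrier_mat n m" and S: "S \<subseteq> {0..<n}"
  shows "submatrix (mat_diag n d * P) S UNIV = mat_diag (card S) (\<lambda>i. d (pick S i)) * submatrix P S UNIV"
proof -
  have sub: "submatrix P S UNIV \<in> carrier_mat (card S) m"
    using submatrix_rows_carrier[of S P] S P by auto
  have "pick S i < n" if "i < card S" for i
    using pick_in_set_le[OF that] S by auto
  then show ?thesis
    using P S sub submatrix_rows_carrier[of S "mat_diag n d * P"]
    by (intro eq_matI) (auto simp: mat_diag_mult_left[OF P] mat_diag_mult_left[OF sub] submatrix_rows_index)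
qed

lemma det_submatrix_rows_mat_diag_mult:
  fixes P :: "'a :: comm_ring_1 mat"
  assumes P: "P \<in> carrier_mat n k" and S: "S \<subseteq> {0..<n}" "card S = k"
  shows "det (submatrix (mat_diag n d * P) S UNIV) = (\<Prod>j\<in>S. d j) * det (submatrix P S UNIV)"
proof -
  have sub: "submatrix P S UNIV \<in> carrier_mat k k"
    using submatrix_rows_carrier[of S P] S P by auto
  have "(\<Prod>i<k. d (pick S i)) = (\<Prod>j\<in>S. d j)"
    using prod.reindex_bij_betw[OF bij_betw_pick, of S d] S finite_subset
    by (auto simp: atLeast0LessThan)
  then show ?thesis
    using submatrix_rows_mat_diag_mult[OF P S(1)] det_mult[OF _ sub] S(2)
    by (simp add: det_mat_diag)
qed

lemma Max_prod_subsets_nonneg: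
  fixes c :: "nat \<Rightarrow> real"
  assumes "k \<le> n" and c: "\<And>j. j < n \<Longrightarrow> 0 \<le> c j"
  shows "0 \<le> (MAX S \<in> {S. S \<subseteq> {0..<n} \<and> card S = k}. \<Prod>j\<in>S. c j)"
proof -
  have "finite {S. S \<subseteq> {0..<n} \<and> card S = k}"
    by (rule finite_subset[of _ "Pow {0..<n}"]) auto
  then have "(\<Prod>j\<in>{0..<k}. c j) \<le> (MAX S \<in> {S. S \<subseteq> {0..<n} \<and> card S = k}. \<Prod>j\<in>S. c j)"
    using assms by (intro Max_ge) auto
  moreover have "0 \<le> (\<Prod>j\<in>{0..<k}. c j)"
    using assms by (intro prod_nonneg) auto
  ultimately show ?thesis
    by linarith
qed

lemma det_mult_mat_diag_le:
  fixes X P :: "complex mat" and c :: "nat \<Rightarrow> real"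
  assumes X: "X \<in> carrier_mat k n" and P: "P \<in> carrier_mat n k" and k: "k \<le> n"
    and c: "\<And>j. j < n \<Longrightarrow> 0 \<le> c j"
  shows "cmod (det (X * (mat_diag n (\<lambda>j. of_real (c j)) * P)))
    \<le> (MAX S \<in> {S. S \<subseteq> {0..<n} \<and> card S = k}. \<Prod>j\<in>S. c j)
      * sqrt (cmod (det (X * mat_adjoint X))) * sqrt (cmod (det (mat_adjoint P * P)))"
proof -
  let ?Sk = "{S. S \<subseteq> {0..<n} \<and> card S = k}" and ?D = "mat_diag n (\<lambda>j. of_real (c j))"
  define M where "M = (MAX S \<in> ?Sk. \<Prod>j\<in>S. c j)"
  define a where "a S = det (submatrix X UNIV S)" for S
  define b where "b S = det (submatrix P S UNIV)" for S
  have M: "(\<Prod>j\<in>S. c j) \<le> M" and c_S: "0 \<le> (\<Prod>j\<in>S. c j)" if "S \<in> ?Sk" for S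
  proof -
    have "finite ?Sk"
      by (rule finite_subset[of _ "Pow {0..<n}"]) auto
    then show "(\<Prod>j\<in>S. c j) \<le> M"
      unfolding M_def using that by (intro Max_ge) auto
    show "0 \<le> (\<Prod>j\<in>S. c j)"
      using that c by (intro prod_nonneg) auto
  qed
  have DP: "?D * P \<in> carrier_mat n k"
    using mult_carrier_mat[OF mat_diag_dim P] .
  have "det (X * (?D * P)) = (\<Sum>S\<in>?Sk. a S * det (submatrix (?D * P) S UNIV))"
    unfolding a_def by (rule Cauchy_Binet[OF X DP])
  also have "\<dots> = (\<Sum>S\<in>?Sk. of_real (\<Prod>j\<in>S. c j) * (a S * b S))"
    unfolding b_def using det_submatrix_rows_mat_diag_mult[OF P] by (intro sum.cong) auto
  finally have "cmod (det (X * (?D * P))) \<le> (\<Sum>S\<in>?Sk. cmod (of_real (\<Prod>j\<in>S. c j) * (a S * b S)))"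
    by (simp only: norm_sum)
  also have "\<dots> \<le> (\<Sum>S\<in>?Sk. M * (cmod (a S) * cmod (b S)))"
    using M c_S by (intro sum_mono) (simp add: norm_mult mult_right_mono del: of_real_prod)
  also have "\<dots> \<le> M * (sqrt (\<Sum>S\<in>?Sk. (cmod (a S))\<^sup>2) * sqrt (\<Sum>S\<in>?Sk. (cmod (b S))\<^sup>2))"
    unfolding sum_distrib_left[symmetric] using Max_prod_subsets_nonneg[OF k c]
    by (intro mult_left_mono sum_mult_le_sqrt_sum_squares) (simp add: M_def)
  also have "(\<Sum>S\<in>?Sk. (cmod (a S))\<^sup>2) = cmod (det (X * mat_adjoint X))"
    unfolding a_def det_gram_eq_sum_minors[OF X] by (simp del: of_real_sum of_real_power add: sum_nonneg)
  also have "(\<Sum>S\<in>?Sk. (cmod (b S))\<^sup>2) = cmod (det (mat_adjoint P * P))"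
    unfolding b_def by (rule cmod_det_gram_eq_sum_minors[OF P, symmetric])
  finally show ?thesis
    by (simp add: M_def mult.assoc)
qed

section \<open>Products of eigenvalues\<close>

lemma factor_column_bounds:
  fixes A :: "complex mat" and c :: "nat \<Rightarrow> real"
  assumes A: "A \<in> carrier_mat n m" and bound: "\<And>i j. i < n \<Longrightarrow> j < m \<Longrightarrow> cmod (A $$ (i, j)) \<le> c j"
  obtains B where "B \<in> carrier_mat n m" "A = B * mat_diag m (\<lambda>j. of_real (c j))"
    "\<And>i j. i < n \<Longrightarrow> j < m \<Longrightarrow> cmod (B $$ (i, j)) \<le> 1"
proof -
  define B where "B = mat n m (\<lambda>(i, j). if c j = 0 then 0 else A $$ (i, j) / of_real (c j))"
  have B: "B \<in> carrier_mat n m"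
    by (simp add: B_def)
  have "A $$ (i, j) = 0" if "i < n" "j < m" "c j = 0" for i j
    using bound[of i j] that by simp
  then have "A = B * mat_diag m (\<lambda>j. of_real (c j))"
    unfolding mat_diag_mult_right[OF B] using A by (intro eq_matI) (auto simp: B_def)
  moreover have "cmod (B $$ (i, j)) \<le> 1" if "i < n" "j < m" for i j
    using bound[OF that] that norm_ge_zero[of "A $$ (i, j)"]
    by (auto simp: B_def norm_divide divide_le_eq)
  ultimately show ?thesis
    using that B by blast
qed

lemma det_invariant_block_le:
  fixes A P C :: "complex mat" and c :: "nat \<Rightarrow> real"
  assumes A: "A \<in> carrier_mat n n" and P: "P \<in> carrier_mat n k" and C: "C \<in> carrier_mat k k"
    and AP: "A * P = P * C"
    and inj: "\<And>v. v \<in> carrier_vec k \<Longrightarrow> P *\<^sub>v v = 0\<^sub>v n \<Longrightarrow> v = 0\<^sub>v k"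
    and bound: "\<And>i j. i < n \<Longrightarrow> j < n \<Longrightarrow> cmod (A $$ (i, j)) \<le> c j"
    and k: "0 < k" "k \<le> n"
  shows "cmod (det C)
    \<le> sqrt ((real n ^ 2 / k) ^ k) * (MAX S \<in> {S. S \<subseteq> {0..<n} \<and> card S = k}. \<Prod>j\<in>S. c j)"
proof -
  let ?D = "mat_diag n (\<lambda>j. of_real (c j))" and ?G = "mat_adjoint P * P"
  let ?M = "MAX S \<in> {S. S \<subseteq> {0..<n} \<and> card S = k}. \<Prod>j\<in>S. c j" and ?R = "(real n ^ 2 / k) ^ k"
  obtain B where B: "B \<in> carrier_mat n n" and ABD: "A = B * ?D"
    and B1: "\<And>i j. i < n \<Longrightarrow> j < n \<Longrightarrow> cmod (B $$ (i, j)) \<le> 1"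
    using factor_column_bounds[OF A bound] by blast
  let ?X = "mat_adjoint P * B"
  have aP: "mat_adjoint P \<in> carrier_mat k n" and X: "?X \<in> carrier_mat k n"
    using P B by auto
  have DP: "?D * P \<in> carrier_mat n k"
    using mult_carrier_mat[OF mat_diag_dim P] .
  have c0: "0 \<le> c j" if "j < n" for j
    using bound[of 0 j] that norm_ge_zero order_trans by blast
  have "?G * C = mat_adjoint P * (A * P)"
    using assoc_mult_mat[OF aP P C] AP by simp
  also have "\<dots> = ?X * (?D * P)"
    using ABD assoc_mult_mat[OF B mat_diag_dim P] assoc_mult_mat[OF aP B DP] by simp
  finally have "cmod (det ?G) * cmod (det C) = cmod (det (?X * (?D * P)))"
    using det_mult[OF mult_carrier_mat[OF aP P] C] by (simp add: norm_mult)
  also have "\<dots> \<le> ?M * sqrt (cmod (det (?X * mat_adjoint ?X))) * sqrt (cmod (det ?G))"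
    by (rule det_mult_mat_diag_le[OF X P k(2) c0])
  also have "\<dots> \<le> ?M * sqrt (?R * cmod (det ?G)) * sqrt (cmod (det ?G))"
  proof -
    have "(\<Sum>i<n. \<Sum>j<n. (cmod (B $$ (i, j)))\<^sup>2) \<le> (\<Sum>i<n. \<Sum>j<n. 1)"
      using B1 by (intro sum_mono) (simp add: power_le_one)
    then have "((\<Sum>i<n. \<Sum>j<n. (cmod (B $$ (i, j)))\<^sup>2) / k) ^ k \<le> ?R"
      by (intro power_mono divide_right_mono divide_nonneg_nonneg sum_nonneg) (auto simp: power2_eq_square)
    then have "cmod (det (?X * mat_adjoint ?X)) \<le> ?R * cmod (det ?G)"
      using det_compression_le[OF P B k(1) inj] by (meson mult_right_mono norm_ge_zero order_trans)
    moreover have "0 \<le> ?M"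
      using k(2) c0 by (rule Max_prod_subsets_nonneg)
    ultimately show ?thesis
      by (intro mult_right_mono mult_left_mono real_sqrt_le_mono) auto
  qed
  also have "\<dots> = (sqrt ?R * ?M) * cmod (det ?G)"
    by (simp add: real_sqrt_mult mult_ac)
  finally show ?thesis
    using det_gram_nonzero[OF P inj] by simp
qed

lemma upper_triangular_leading_block:
  fixes B :: "'a :: comm_ring_1 mat"
  assumes B: "B \<in> carrier_mat n n" and ut: "upper_triangular B" and k: "k \<le> n"
  shows "B * mat n k (\<lambda>(i, j). if i = j then 1 else 0)
    = mat n k (\<lambda>(i, j). if i = j then 1 else 0) * mat k k (\<lambda>(i, j). B $$ (i, j))"
    (is "B * ?E = ?E * ?C")
proof (rule eq_matI)
  fix i j
  assume "i < dim_row (?E * ?C)" "j < dim_col (?E * ?C)"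
  then have i: "i < n" and j: "j < k"
    by auto
  have "(B * ?E) $$ (i, j) = (\<Sum>l\<in>{0..<n}. B $$ (i, l) * (if l = j then 1 else 0))"
    using B i j k by (simp add: scalar_prod_def)
  also have "\<dots> = (\<Sum>l\<in>{0..<n}. if l = j then B $$ (i, j) else 0)"
    by (intro sum.cong) auto
  also have "\<dots> = B $$ (i, j)"
    using j k by simp
  also have "\<dots> = (\<Sum>l\<in>{0..<k}. if l = i then B $$ (i, j) else 0)"
    using ut B i j unfolding upper_triangular_def by auto
  also have "\<dots> = (\<Sum>l\<in>{0..<k}. (if i = l then 1 else 0) * B $$ (l, j))"
    by (intro sum.cong) auto
  also have "\<dots> = (?E * ?C) $$ (i, j)"
    using i j k by (simp add: scalar_prod_def)
  finally show "(B * ?E) $$ (i, j) = (?E * ?C) $$ (i, j)" .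
qed (use B in auto)

lemma det_leading_block_upper_triangular:
  fixes B :: "'a :: comm_ring_1 mat"
  assumes B: "B \<in> carrier_mat n n" and ut: "upper_triangular B" and k: "k \<le> n"
  shows "det (mat k k (\<lambda>(i, j). B $$ (i, j))) = (\<Prod>i<k. B $$ (i, i))"
proof -
  have "upper_triangular (mat k k (\<lambda>(i, j). B $$ (i, j)))"
    using ut B k unfolding upper_triangular_def by auto
  then have "det (mat k k (\<lambda>(i, j). B $$ (i, j))) = prod_list (diag_mat (mat k k (\<lambda>(i, j). B $$ (i, j))))"
    by (rule det_upper_triangular) auto
  then show ?thesis
    by (simp add: prod_list_diag_prod atLeast0LessThan)
qed

lemma leading_columns_inj:
  fixes Q Q' :: "'a :: comm_ring_1 mat"
  assumes Q: "Q \<in> carrier_mat n n" and Q': "Q' \<in> carrier_mat n n" and inv: "Q' * Q = 1\<^sub>m n"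
    and k: "k \<le> n" and v: "v \<in> carrier_vec k"
    and Qv: "Q * mat n k (\<lambda>(i, j). if i = j then 1 else 0) *\<^sub>v v = 0\<^sub>v n"
  shows "v = 0\<^sub>v k"
proof (rule eq_vecI)
  define E where "E = mat n k (\<lambda>(i, j). if i = j then 1 else (0 :: 'a))"
  have E: "E \<in> carrier_mat n k"
    by (simp add: E_def)
  have "E *\<^sub>v v = Q' *\<^sub>v (Q * E *\<^sub>v v)"
    using inv assoc_mult_mat_vec[OF Q' Q, of "E *\<^sub>v v"] assoc_mult_mat_vec[OF Q E v] E v by simp
  also have "\<dots> = 0\<^sub>v n"
    using Qv Q' by (intro eq_vecI) (auto simp: E_def)
  finally have Ev: "E *\<^sub>v v = 0\<^sub>v n" .
  fix i
  assume "i < dim_vec (0\<^sub>v k)"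
  then have i: "i < k"
    by simp
  have "(E *\<^sub>v v) $ i = (\<Sum>l\<in>{0..<k}. (if i = l then 1 else 0) * v $ l)"
    using i v k by (simp add: E_def scalar_prod_def)
  also have "\<dots> = (\<Sum>l\<in>{0..<k}. if i = l then v $ i else 0)"
    by (intro sum.cong) auto
  finally show "v $ i = 0\<^sub>v k $ i"
    using Ev i k by simp
qed (use v in auto)

lemma schur_leading_block:
  fixes A :: "complex mat"
  assumes A: "A \<in> carrier_mat n n" and cp: "char_poly A = (\<Prod>a\<leftarrow>eigs. [:- a, 1:])" and k: "k \<le> n"
  obtains P C where "P \<in> carrier_mat n k" "C \<in> carrier_mat k k" "A * P = P * C"
    "\<And>v. v \<in> carrier_vec k \<Longrightarrow> P *\<^sub>v v = 0\<^sub>v n \<Longrightarrow> v = 0\<^sub>v k"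
    "det C = (\<Prod>i<k. eigs ! i)"
proof -
  obtain B Q Q' where "schur_decomposition A eigs = (B, Q, Q')"
    by (cases "schur_decomposition A eigs") auto
  from schur_decomposition[OF A cp this] have sim: "similar_mat_wit A B Q Q'"
    and ut: "upper_triangular B" and diag: "diag_mat B = eigs"
    by auto
  from similar_mat_witD2[OF A sim] have B: "B \<in> carrier_mat n n" and Q: "Q \<in> carrier_mat n n"
    and Q': "Q' \<in> carrier_mat n n" and inv: "Q' * Q = 1\<^sub>m n" and AQ: "A = Q * B * Q'"
    by auto
  define E where "E = mat n k (\<lambda>(i, j). if i = j then 1 else (0 :: complex))"
  define C where "C = mat k k (\<lambda>(i, j). B $$ (i, j))"
  have E: "E \<in> carrier_mat n k" and C: "C \<in> carrier_mat k k"
    by (auto simp: E_def C_def)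
  have "A * Q = Q * B"
    using AQ assoc_mult_mat[OF mult_carrier_mat[OF Q B] Q' Q] inv Q B by simp
  then have "A * (Q * E) = Q * E * C"
    using upper_triangular_leading_block[OF B ut k] assoc_mult_mat[OF A Q E]
      assoc_mult_mat[OF Q B E] assoc_mult_mat[OF Q E C]
    by (simp add: E_def C_def)
  moreover have "det C = (\<Prod>i<k. eigs ! i)"
    using det_leading_block_upper_triangular[OF B ut k] diag B k
    by (auto simp: C_def diag_mat_def intro!: prod.cong)
  ultimately show ?thesis
    using that[OF mult_carrier_mat[OF Q E] C] leading_columns_inj[OF Q Q' inv k] by (simp add: E_def)
qed

lemma powr_half_mult_sqrt_power:
  fixes x y :: real
  assumes "0 < x" "0 \<le> y"
  shows "x powr (real k / 2) * sqrt y ^ k = sqrt ((x * y) ^ k)"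
proof -
  have "x powr (real k / 2) = (x powr real k) powr (1 / 2)"
    by (simp add: powr_powr)
  also have "\<dots> = sqrt (x ^ k)"
    using assms by (simp add: powr_realpow powr_half_sqrt)
  finally show ?thesis
    by (simp add: real_sqrt_power real_sqrt_mult power_mult_distrib)
qed

lemma prod_eigenvalues_le_col_norms:
  fixes A :: "complex mat"
  assumes A: "A \<in> carrier_mat n n" and k: "0 < k" "k \<le> n"
    and cp: "char_poly A = (\<Prod>a\<leftarrow>eigs. [:- a, 1:])"
  shows "cmod (\<Prod>i<k. eigs ! i) \<le> sqrt ((real n ^ 2 / k) ^ k) *
    (MAX \<alpha> \<in> {\<alpha>. \<alpha> \<subseteq> {0..<n} \<and> card \<alpha> = k}. \<Prod>i\<in>\<alpha>. vec_inf_norm (col A i))"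
proof -
  obtain P C where P: "P \<in> carrier_mat n k" and C: "C \<in> carrier_mat k k" and AP: "A * P = P * C"
    and inj: "\<And>v. v \<in> carrier_vec k \<Longrightarrow> P *\<^sub>v v = 0\<^sub>v n \<Longrightarrow> v = 0\<^sub>v k"
    and det: "det C = (\<Prod>i<k. eigs ! i)"
    using schur_leading_block[OF A cp k(2)] by blast
  have "cmod (A $$ (i, j)) \<le> vec_inf_norm (col A j)" if "i < n" "j < n" for i j
  proof -
    have "cmod (A $$ (i, j)) = cmod (col A j $ i)"
      using A that by simp
    also have "\<dots> \<le> vec_inf_norm (col A j)"
      unfolding vec_inf_norm_def using A that by (intro Max_ge) auto
    finally show ?thesis .
  qed
  from det_invariant_block_le[OF A P C AP inj this k] show ?thesis
    unfolding det .
qed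

theorem theorem3p13:
  fixes A :: "complex mat" and n k :: nat and eigs :: "complex list"
  assumes "A \<in> carrier_mat n n"
    and "1 \<le> k" and "k \<le> n"
    and "length eigs = n"
    and "char_poly A = (\<Prod>a\<leftarrow>eigs. [:- a, 1:])"
    and "sorted_wrt (\<lambda>x y. cmod x \<ge> cmod y) eigs"
  shows "cmod (\<Prod>i<k. eigs ! i)
    \<le> (real n / real k) powr (real k / 2) * sqrt (real n) ^ k *
       min (MAX \<alpha> \<in> {\<alpha>. \<alpha> \<subseteq> {0..<n} \<and> card \<alpha> = k}. \<Prod>i\<in>\<alpha>. vec_inf_norm (col A i))
           (MAX \<alpha> \<in> {\<alpha>. \<alpha> \<subseteq> {0..<n} \<and> card \<alpha> = k}. \<Prod>i\<in>\<alpha>. vec_inf_norm (row A i))"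
proof -
  note A = assms(1) and k = assms(2,3) and cp = assms(5)
  let ?Sk = "{\<alpha>. \<alpha> \<subseteq> {0..<n} \<and> card \<alpha> = k}"
  have const: "(real n / real k) powr (real k / 2) * sqrt (real n) ^ k = sqrt ((real n ^ 2 / k) ^ k)"
    using k by (simp add: powr_half_mult_sqrt_power power2_eq_square)
  have "A\<^sup>T \<in> carrier_mat n n" "char_poly A\<^sup>T = (\<Prod>a\<leftarrow>eigs. [:- a, 1:])"
    using A cp by simp_all
  from prod_eigenvalues_le_col_norms[OF this(1) _ k(2) this(2)] k
  have "cmod (\<Prod>i<k. eigs ! i) \<le> sqrt ((real n ^ 2 / k) ^ k) *
      (MAX \<alpha> \<in> ?Sk. \<Prod>i\<in>\<alpha>. vec_inf_norm (row A i))"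
    using A by (auto simp: subset_eq intro!: arg_cong[where f = Max] image_cong prod.cong)
  moreover have "cmod (\<Prod>i<k. eigs ! i) \<le> sqrt ((real n ^ 2 / k) ^ k) *
      (MAX \<alpha> \<in> ?Sk. \<Prod>i\<in>\<alpha>. vec_inf_norm (col A i))"
    using prod_eigenvalues_le_col_norms[OF A _ k(2) cp] k by simp
  ultimately show ?thesis
    unfolding const by (simp add: min_def)
qed

end
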